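(* Consider the D2EAL algorithm (without periodic reset) described in the context with horizon $T\ge1$ and $\eta_\alpha,\eta_w>0$, and fix $i\in[N]$. Assume: (Assumption 1) $\Omega_i(t)\subseteq\Omega_i(t-1)$ for all $t=1,\dots,T$; (Assumption 2) $|l(x_1,y)-l(x_2,y)|\le L_1\|x_1-x_2\|$ for all $x_1,x_2\in\mathcal A$, $y\in\mathcal Y$, for some constant $L_1\ge0$; (Assumption 3) there are nonnegative numbers $\delta_1,\dots,\delta_T$ with $\|f_{t,k}-f_{t,j}\|\le\delta_t$ for all $k,j\in[N]$, $t=1,\dots,T$; (Assumption 4) with $i^*\in\arg\min_{j\in[N]}L_{T,j}$, one has $L_{T,i^*}\le c_0T^{1-\alpha}$ for some constants $c_0\ge0$ and $\alpha\in(0,1]$. Let $\Delta_o\ge\sum_{t=1}^T\delta_t$ and $j^*\in\arg\min_{j\in[N]}\bar L_{T,j}$. Then $$R_i^{GS}(T):=\hat L_{T,i}-\bar L_{T,j^*}\le\frac{\eta_wT}{8}+\frac{\log d_i(0)}{\eta_w}+\frac{\eta_\alpha T}{8}+\frac{\log2}{\eta_\alpha}+L_1\Delta_o+c_0T^{1-\alpha}.$$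
   Context: Setup. There are $N\ge 1$ agents indexed by $i\in[N]$ and a horizon $T\ge1$. The outcome space $\mathcal Y$ and action space $\mathcal A$ are convex subsets of $\mathbb R^n$, $\|\cdot\|$ is the Euclidean norm. The loss $l:\mathcal A\times\mathcal Y\to[0,1]$ is convex in its first argument. The target sequence $y_1,\dots,y_T\in\mathcal Y$ is arbitrary. For each agent $i$ and each $t\ge1$, an "expert" supplies an arbitrary prediction $f_{t,i}\in\mathcal A$ of $y_t$ (available at time $t-1$). Agents communicate over a time-varying undirected graph; $\Omega_i(t)$ is the set of neighbours of agent $i$ at time $t$, $\Lambda_i(t):=\Omega_i(t)\cup\{i\}$ and $d_i(t):=|\Lambda_i(t)|$. D2EAL (without periodic reset). Initialize $\hat f_{0,i}=f_{1,i}$, $\hat\alpha_i(0)=\hat\alpha'_i(0)=\hat w_{ii}(0)=1$ for all $i$. For $t=0,1,\dots,T-1$, each agent $i$ computes: $\alpha_i(t)=\hat\alpha_i(t)/(\hat\alpha_i(t)+\hat\alpha'_i(t))$; individual prediction $\bar f_{t+1,i}=\alpha_i(t)f_{t+1,i}+(1-\alpha_i(t))\hat f_{t,i}$; social weights $w_{ij}(t)=\hat w_{jj}(t)/\sum_{j'\in\Lambda_i(t)}\hat w_{j'j'}(t)$ for $j\in\Lambda_i(t)$ and $w_{ij}(t)=0$ otherwise; social prediction $\hat f_{t+1,i}=\sum_{j\in\Lambda_i(t)}w_{ij}(t)\bar f_{t+1,j}$. After $y_{t+1}$ is revealed, define the losses $l_{t+1,i}=l(f_{t+1,i},y_{t+1})$,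 $\hat l^-_{t+1,i}=l(\hat f_{t,i},y_{t+1})$, $\bar l_{t+1,i}=l(\bar f_{t+1,i},y_{t+1})$, $\hat l_{t+1,i}=l(\hat f_{t+1,i},y_{t+1})$, and update $\hat\alpha_i(t+1)=\hat\alpha_i(t)e^{-\eta_\alpha l_{t+1,i}}$, $\hat\alpha'_i(t+1)=\hat\alpha'_i(t)e^{-\eta_\alpha \hat l^-_{t+1,i}}$, $\hat w_{ii}(t+1)=\hat w_{ii}(t)e^{-\eta_w\bar l_{t+1,i}}$. Cumulative losses: $L_{T,i}=\sum_{t=1}^T l_{t,i}$, $\hat L^-_{T,i}=\sum_{t=1}^T\hat l^-_{t,i}$, $\bar L_{T,i}=\sum_{t=1}^T\bar l_{t,i}$, $\hat L_{T,i}=\sum_{t=1}^T\hat l_{t,i}$. *)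

theory Defs
  imports "HOL-Analysis.Analysis"
begin

text \<open>Agents are natural numbers i < N.
  Expert predictions: f t i (time t >= 1, agent i).  Step sizes ea (eta_alpha), ew (eta_w).
  The state at time t of agent i is the tuple
  (alpha_hat_i(t), alpha_hat'_i(t), w_hat_ii(t), f_hat_{t,i}).\<close>

definition Lam :: "(nat \<Rightarrow> nat \<Rightarrow> nat set) \<Rightarrow> nat \<Rightarrow> nat \<Rightarrow> nat set" where
  "Lam Omega i t = insert i (Omega i t)"

definition st_alpha :: "(nat \<Rightarrow> real \<times> real \<times> real \<times> 'a) \<Rightarrow> nat \<Rightarrow> real" where
  "st_alpha S i = fst (S i) / (fst (S i) + fst (snd (S i)))"

text \<open>individual prediction bar f_{t+1,i} computed from the state at time t\<close>
definition st_fbar :: "(nat \<Rightarrow> nat \<Rightarrow> 'a::real_vector) \<Rightarrow> (nat \<Rightarrow> real \<times> real \<times> real \<times> 'a)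
    \<Rightarrow> nat \<Rightarrow> nat \<Rightarrow> 'a" where
  "st_fbar f S t i = st_alpha S i *\<^sub>R f (Suc t) i + (1 - st_alpha S i) *\<^sub>R snd (snd (snd (S i)))"

definition st_w :: "(nat \<Rightarrow> nat \<Rightarrow> nat set) \<Rightarrow> (nat \<Rightarrow> real \<times> real \<times> real \<times> 'a)
    \<Rightarrow> nat \<Rightarrow> nat \<Rightarrow> nat \<Rightarrow> real" where
  "st_w Omega S t i j = (if j \<in> Lam Omega i t
      then fst (snd (snd (S j))) / (\<Sum>j'\<in>Lam Omega i t. fst (snd (snd (S j')))) else 0)"

primrec d2eal_state :: "real \<Rightarrow> real \<Rightarrow> ('a::real_vector \<Rightarrow> 'a \<Rightarrow> real) \<Rightarrow> (nat \<Rightarrow> nat \<Rightarrow> 'a)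
    \<Rightarrow> (nat \<Rightarrow> 'a) \<Rightarrow> (nat \<Rightarrow> nat \<Rightarrow> nat set) \<Rightarrow> nat \<Rightarrow> (nat \<Rightarrow> real \<times> real \<times> real \<times> 'a)" where
  "d2eal_state ea ew l f y Omega 0 = (\<lambda>i. (1, 1, 1, f 1 i))"
| "d2eal_state ea ew l f y Omega (Suc t) =
     (let S = d2eal_state ea ew l f y Omega t in
      (\<lambda>i. (fst (S i) * exp (- ea * l (f (Suc t) i) (y (Suc t))),
            fst (snd (S i)) * exp (- ea * l (snd (snd (snd (S i)))) (y (Suc t))),
            fst (snd (snd (S i))) * exp (- ew * l (st_fbar f S t i) (y (Suc t))),
            (\<Sum>j\<in>Lam Omega i t. st_w Omega S t i j *\<^sub>R st_fbar f S t j))))"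

definition fhat where
  "fhat ea ew l f y Omega t i = snd (snd (snd (d2eal_state ea ew l f y Omega t i)))"

text \<open>individual prediction bar f_{t,i}, for t >= 1\<close>
definition fbar where
  "fbar ea ew l f y Omega t i = st_fbar f (d2eal_state ea ew l f y Omega (t - 1)) (t - 1) i"

definition cumL :: "('a \<Rightarrow> 'a \<Rightarrow> real) \<Rightarrow> (nat \<Rightarrow> nat \<Rightarrow> 'a) \<Rightarrow> (nat \<Rightarrow> 'a) \<Rightarrow> nat \<Rightarrow> nat \<Rightarrow> real" where
  "cumL l f y T i = (\<Sum>t=1..T. l (f t i) (y t))"

definition cumLbar where
  "cumLbar ea ew l f y Omega T i = (\<Sum>t=1..T. l (fbar ea ew l f y Omega t i) (y t))"

definition cumLhat where
  "cumLhat ea ew l f y Omega T i = (\<Sum>t=1..T. l (fhat ea ew l f y Omega t i) (y t))"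

end

theory Submission
  imports Defs "HOL-Probability.Hoeffding"
begin

text \<open>Both layers of D2EAL are exponentially weighted forecasters and are analysed through
  their potentials, the sums of the unnormalised weights.  By Hoeffding's lemma and Jensen's
  inequality for the convex loss, one round multiplies a potential by at most
  \<open>exp (- \<eta> \<ell> + \<eta>\<^sup>2 / 8)\<close>, where \<open>\<ell>\<close> is the loss of the layer's prediction, while after
  \<open>T\<close> rounds the potential dominates the weight \<open>exp (- \<eta> L)\<close> of each single competitor.
  Taking logarithms compares the social predictions of agent \<open>i\<close> with its individual ones
  (since the neighbourhoods shrink, the social potential starts at \<open>d\<^sub>i(0)\<close>), and those
  with the expert of agent \<open>i\<close>.  Lipschitz continuity and the closeness of the experts then
  pass to the best expert \<open>i*\<close>; of the comparator \<open>j*\<close> only the nonnegativity of its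
  loss is used.\<close>

lemma exp_neg_mult_le_chord:
  fixes x h :: real
  assumes "0 \<le> x" "x \<le> 1" "0 \<le> h"
  shows "exp (- h * x) \<le> 1 - x + x * exp (- h)"
  using convex_onD[OF convex_on_exp[OF assms(3)], of x 0 "-1"] assms by simp

lemma chord_le_exp_Hoeffding:
  fixes p h :: real
  assumes "0 \<le> p" "p \<le> 1" "0 \<le> h"
  shows "1 - p + p * exp (- h) \<le> exp (- h * p + h\<^sup>2 / 8)"
proof -
  define q where "q = 1 + (1 - p) * (exp h - 1)"
  have "q > 0"
    unfolding q_def using assms by (intro add_pos_nonneg mult_nonneg_nonneg) auto
  have "- h * (1 - p) + ln q \<le> h\<^sup>2 / 8"
    unfolding q_def by (rule Hoeffdings_lemma_aux) (use assms in auto)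
  then have "ln q \<le> h * (1 - p) + h\<^sup>2 / 8"
    by simp
  then have "q \<le> exp (h * (1 - p) + h\<^sup>2 / 8)"
    using \<open>q > 0\<close> by (metis exp_le_cancel_iff exp_ln)
  then have "exp (- h) * q \<le> exp (- h) * exp (h * (1 - p) + h\<^sup>2 / 8)"
    by simp
  moreover have "exp (- h) * q = 1 - p + p * exp (- h)"
    unfolding q_def by (simp add: algebra_simps exp_minus field_simps)
  ultimately show ?thesis
    by (simp add: exp_add[symmetric] algebra_simps)
qed

lemma exp_weights_step:
  fixes w :: "'i \<Rightarrow> real" and p :: "'i \<Rightarrow> 'b::real_vector" and \<phi> :: "'b \<Rightarrow> real"
  assumes S: "finite S" "S \<noteq> {}"
    and w: "\<And>j. j \<in> S \<Longrightarrow> 0 \<le> w j" "sum w S > 0"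
    and \<phi>: "convex_on C \<phi>" "\<And>j. j \<in> S \<Longrightarrow> p j \<in> C"
    and \<phi>_range: "\<And>j. j \<in> S \<Longrightarrow> 0 \<le> \<phi> (p j) \<and> \<phi> (p j) \<le> 1"
    and h: "0 \<le> h"
  shows "(\<Sum>j\<in>S. w j * exp (- h * \<phi> (p j)))
           \<le> sum w S * exp (- h * \<phi> (\<Sum>j\<in>S. (w j / sum w S) *\<^sub>R p j) + h\<^sup>2 / 8)"
proof -
  define W where "W = sum w S"
  define m where "m = (\<Sum>j\<in>S. w j * \<phi> (p j)) / W"
  have m_range: "0 \<le> m" "m \<le> 1"
  proof -
    have "0 \<le> (\<Sum>j\<in>S. w j * \<phi> (p j))"
      using w \<phi>_range by (intro sum_nonneg) auto
    moreover have "(\<Sum>j\<in>S. w j * \<phi> (p j)) \<le> W"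
      unfolding W_def using w \<phi>_range by (intro sum_mono) (auto intro: mult_right_le_one_le)
    ultimately show "0 \<le> m" "m \<le> 1"
      using w(2) by (auto simp: m_def W_def)
  qed
  have jensen: "\<phi> (\<Sum>j\<in>S. (w j / W) *\<^sub>R p j) \<le> m"
  proof -
    have "\<phi> (\<Sum>j\<in>S. (w j / W) *\<^sub>R p j) \<le> (\<Sum>j\<in>S. (w j / W) * \<phi> (p j))"
      using w by (intro convex_on_sum[OF S \<phi>(1)] \<phi>(2))
        (auto simp: W_def sum_divide_distrib[symmetric])
    then show ?thesis
      by (simp add: m_def sum_divide_distrib)
  qed
  have "(\<Sum>j\<in>S. w j * exp (- h * \<phi> (p j))) \<le> (\<Sum>j\<in>S. w j * (1 - \<phi> (p j) + \<phi> (p j) * exp (- h)))"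
    using w \<phi>_range h by (intro sum_mono mult_left_mono exp_neg_mult_le_chord) auto
  also have "\<dots> = W - m * W + m * W * exp (- h)"
  proof -
    have "m * W = (\<Sum>j\<in>S. w j * \<phi> (p j))"
      using w(2) by (simp add: m_def W_def)
    then show ?thesis
      by (simp add: W_def algebra_simps sum_subtractf sum.distrib sum_distrib_left)
  qed
  also have "\<dots> = W * (1 - m + m * exp (- h))"
    by (simp add: algebra_simps)
  also have "\<dots> \<le> W * exp (- h * m + h\<^sup>2 / 8)"
    using w(2) m_range h by (intro mult_left_mono chord_le_exp_Hoeffding) (auto simp: W_def)
  also have "\<dots> \<le> W * exp (- h * \<phi> (\<Sum>j\<in>S. (w j / W) *\<^sub>R p j) + h\<^sup>2 / 8)"
    using jensen h w(2) by (intro mult_left_mono) (auto simp: W_def mult_left_mono)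
  finally show ?thesis
    by (simp add: W_def)
qed

lemma exp_potential_regret:
  fixes P g :: "nat \<Rightarrow> real" and h c :: real
  assumes h: "h > 0"
    and step: "\<And>t. t < n \<Longrightarrow> P (Suc t) \<le> P t * exp (- h * g (Suc t) + h\<^sup>2 / 8)"
    and comparator: "exp (- h * c) \<le> P n"
  shows "(\<Sum>s=1..n. g s) - c \<le> h * real n / 8 + ln (P 0) / h"
proof -
  have telescope: "P m \<le> P 0 * exp (- h * (\<Sum>s=1..m. g s) + real m * h\<^sup>2 / 8)" if "m \<le> n" for m
    using that
  proof (induction m)
    case (Suc m)
    have exponent: "- h * (\<Sum>s=1..Suc m. g s) + real (Suc m) * h\<^sup>2 / 8
        = (- h * (\<Sum>s=1..m. g s) + real m * h\<^sup>2 / 8) + (- h * g (Suc m) + h\<^sup>2 / 8)"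
      by (simp add: algebra_simps)
    from Suc have "P (Suc m) \<le> P 0 * exp (- h * (\<Sum>s=1..m. g s) + real m * h\<^sup>2 / 8)
                              * exp (- h * g (Suc m) + h\<^sup>2 / 8)"
      by (meson Suc_le_lessD less_imp_le_nat order.trans exp_ge_zero mult_right_mono step)
    then show ?case
      unfolding exponent exp_add by (simp add: mult.assoc)
  qed simp
  have "exp (- h * c) \<le> P 0 * exp (- h * (\<Sum>s=1..n. g s) + real n * h\<^sup>2 / 8)"
    using comparator telescope[of n] by simp
  moreover from this have "P 0 > 0"
    by (meson exp_gt_zero order_less_le_trans zero_less_mult_pos2)
  ultimately have "- h * c \<le> ln (P 0) + (- h * (\<Sum>s=1..n. g s) + real n * h\<^sup>2 / 8)"
    by (metis exp_le_cancel_iff exp_ln exp_add)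
  then have "((\<Sum>s=1..n. g s) - c - h * real n / 8) * h \<le> ln (P 0)"
    by (simp add: algebra_simps power2_eq_square)
  then have "(\<Sum>s=1..n. g s) - c - h * real n / 8 \<le> ln (P 0) / h"
    by (simp add: pos_le_divide_eq[OF h])
  then show ?thesis
    by linarith
qed

lemma cumL_le_cumL_add_Lipschitz:
  fixes l :: "'a::real_normed_vector \<Rightarrow> 'a \<Rightarrow> real"
  assumes Lipschitz: "\<And>x1 x2 v. x1 \<in> A \<Longrightarrow> x2 \<in> A \<Longrightarrow> v \<in> Y \<Longrightarrow>
      \<bar>l x1 v - l x2 v\<bar> \<le> L1 * norm (x1 - x2)"
    and "L1 \<ge> 0" and "\<And>t. y t \<in> Y"
    and "\<And>t. 1 \<le> t \<Longrightarrow> t \<le> T \<Longrightarrow> f t i \<in> A \<and> f t k \<in> A"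
    and "\<And>t. 1 \<le> t \<Longrightarrow> t \<le> T \<Longrightarrow> norm (f t i - f t k) \<le> \<delta> t"
  shows "cumL l f y T i \<le> cumL l f y T k + L1 * (\<Sum>t=1..T. \<delta> t)"
proof -
  have "l (f t i) (y t) \<le> l (f t k) (y t) + L1 * \<delta> t" if "t \<in> {1..T}" for t
  proof -
    have "\<bar>l (f t i) (y t) - l (f t k) (y t)\<bar> \<le> L1 * norm (f t i - f t k)"
      using assms that by (intro Lipschitz) auto
    also have "\<dots> \<le> L1 * \<delta> t"
      using assms that by (intro mult_left_mono) auto
    finally show ?thesis
      by linarith
  qed
  then show ?thesis
    unfolding cumL_def by (force simp: sum_distrib_left simp flip: sum.distrib intro: sum_mono)
qed

locale d2eal =
  fixes N :: nat and A Y :: "'a::real_vector set" and l :: "'a \<Rightarrow> 'a \<Rightarrow> real"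
    and f :: "nat \<Rightarrow> nat \<Rightarrow> 'a" and y :: "nat \<Rightarrow> 'a" and Omega :: "nat \<Rightarrow> nat \<Rightarrow> nat set"
    and ea ew :: real
  assumes convex_A: "convex A"
    and loss_range: "\<And>x v. x \<in> A \<Longrightarrow> v \<in> Y \<Longrightarrow> 0 \<le> l x v \<and> l x v \<le> 1"
    and loss_convex: "\<And>v. v \<in> Y \<Longrightarrow> convex_on A (\<lambda>x. l x v)"
    and targets: "\<And>t. y t \<in> Y"
    and experts: "\<And>t j. 1 \<le> t \<Longrightarrow> j < N \<Longrightarrow> f t j \<in> A"
    and neighbours: "\<And>j t. j < N \<Longrightarrow> Omega j t \<subseteq> {..<N}"
    and ea: "ea > 0" and ew: "ew > 0"
begin

abbreviation state where "state \<equiv> d2eal_state ea ew l f y Omega"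
abbreviation fh where "fh \<equiv> fhat ea ew l f y Omega"
abbreviation fb where "fb \<equiv> fbar ea ew l f y Omega"

definition alpha_hat :: "nat \<Rightarrow> nat \<Rightarrow> real" where
  "alpha_hat t j = fst (state t j)"

definition alpha_hat' :: "nat \<Rightarrow> nat \<Rightarrow> real" where
  "alpha_hat' t j = fst (snd (state t j))"

definition w_hat :: "nat \<Rightarrow> nat \<Rightarrow> real" where
  "w_hat t j = fst (snd (snd (state t j)))"

lemma state_0: "alpha_hat 0 j = 1" "alpha_hat' 0 j = 1" "w_hat 0 j = 1" "fh 0 j = f 1 j"
  by (simp_all add: alpha_hat_def alpha_hat'_def w_hat_def fhat_def)

lemma alpha_hat_Suc: "alpha_hat (Suc t) j = alpha_hat t j * exp (- ea * l (f (Suc t) j) (y (Suc t)))"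
  by (simp add: alpha_hat_def Let_def)

lemma alpha_hat'_Suc: "alpha_hat' (Suc t) j = alpha_hat' t j * exp (- ea * l (fh t j) (y (Suc t)))"
  by (simp add: alpha_hat'_def fhat_def Let_def)

lemma alpha_hat_eq: "alpha_hat t j = exp (- ea * cumL l f y t j)"
  by (induction t) (simp_all add: state_0 alpha_hat_Suc cumL_def exp_add[symmetric] algebra_simps)

lemma w_hat_Suc: "w_hat (Suc t) j = w_hat t j * exp (- ew * l (fb (Suc t) j) (y (Suc t)))"
  by (simp add: w_hat_def fbar_def Let_def)

lemma w_hat_eq: "w_hat t j = exp (- ew * cumLbar ea ew l f y Omega t j)"
  by (induction t) (simp_all add: state_0 w_hat_Suc cumLbar_def exp_add[symmetric] algebra_simps)

lemma alpha_hat'_pos: "alpha_hat' t j > 0"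
  by (induction t) (simp_all add: state_0 alpha_hat'_Suc)

lemma alpha_hat_add_pos: "alpha_hat t j + alpha_hat' t j > 0"
  using alpha_hat'_pos[of t j] by (simp add: alpha_hat_eq add_pos_pos)

lemma fbar_Suc:
  "fb (Suc t) j = (alpha_hat t j / (alpha_hat t j + alpha_hat' t j)) *\<^sub>R f (Suc t) j
     + (alpha_hat' t j / (alpha_hat t j + alpha_hat' t j)) *\<^sub>R fh t j"
proof -
  have "1 - alpha_hat t j / (alpha_hat t j + alpha_hat' t j)
      = alpha_hat' t j / (alpha_hat t j + alpha_hat' t j)"
    using alpha_hat_add_pos[of t j] by (simp add: field_simps)
  then show ?thesis
    by (simp add: fbar_def st_fbar_def st_alpha_def alpha_hat_def alpha_hat'_def fhat_def)
qed

lemma fhat_Suc: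
  "fh (Suc t) j = (\<Sum>k\<in>Lam Omega j t.
      (w_hat t k / (\<Sum>k'\<in>Lam Omega j t. w_hat t k')) *\<^sub>R fb (Suc t) k)"
  by (simp add: fhat_def fbar_def w_hat_def Let_def st_w_def cong: sum.cong)

lemma Lam_finite: "j < N \<Longrightarrow> finite (Lam Omega j t)"
  using neighbours by (auto simp: Lam_def intro: finite_subset)

lemma Lam_subset: "j < N \<Longrightarrow> Lam Omega j t \<subseteq> {..<N}"
  using neighbours by (auto simp: Lam_def)

lemma self_in_Lam: "j \<in> Lam Omega j t"
  by (simp add: Lam_def)

lemma fbar_Suc_in_A:
  assumes "j < N" "fh t j \<in> A"
  shows "fb (Suc t) j \<in> A"
proof -
  have "alpha_hat t j / (alpha_hat t j + alpha_hat' t j)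
      + alpha_hat' t j / (alpha_hat t j + alpha_hat' t j) = 1"
    using alpha_hat_add_pos[of t j] by (simp flip: add_divide_distrib)
  then show ?thesis
    unfolding fbar_Suc using assms experts[of "Suc t" j] alpha_hat_add_pos[of t j] alpha_hat'_pos[of t j]
    by (intro convexD[OF convex_A]) (auto simp: alpha_hat_eq)
qed

lemma fhat_in_A: "j < N \<Longrightarrow> fh t j \<in> A"
proof (induction t arbitrary: j)
  case 0
  then show ?case
    by (simp add: state_0 experts)
next
  case (Suc t)
  have "(\<Sum>k\<in>Lam Omega j t. w_hat t k) > 0"
    by (rule sum_pos2[OF Lam_finite[OF Suc.prems] self_in_Lam]) (auto simp: w_hat_eq intro: less_imp_le)
  then show ?case
    unfolding fhat_Suc using Suc Lam_subset[OF Suc.prems]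
    by (intro convex_sum[OF Lam_finite[OF Suc.prems] convex_A])
      (auto simp: sum_divide_distrib[symmetric] w_hat_eq intro!: fbar_Suc_in_A)
qed

lemma fbar_in_A: "1 \<le> t \<Longrightarrow> j < N \<Longrightarrow> fb t j \<in> A"
  using fbar_Suc_in_A[OF _ fhat_in_A] by (cases t) auto

lemma cumLbar_nonneg: "j < N \<Longrightarrow> 0 \<le> cumLbar ea ew l f y Omega T j"
  unfolding cumLbar_def using loss_range[OF fbar_in_A targets] by (intro sum_nonneg) auto

lemma individual_potential_step:
  assumes "j < N"
  shows "alpha_hat (Suc t) j + alpha_hat' (Suc t) j
    \<le> (alpha_hat t j + alpha_hat' t j) * exp (- ea * l (fb (Suc t) j) (y (Suc t)) + ea\<^sup>2 / 8)"
proof -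
  define w where "w c = (if c then alpha_hat t j else alpha_hat' t j)" for c
  define p where "p c = (if c then f (Suc t) j else fh t j)" for c
  have W: "sum w UNIV = alpha_hat t j + alpha_hat' t j"
    by (simp add: w_def UNIV_bool)
  have "0 \<le> w c" "p c \<in> A" for c
    using assms alpha_hat'_pos[of t j]
    by (auto simp: w_def p_def alpha_hat_eq experts fhat_in_A less_imp_le)
  then have "(\<Sum>c\<in>UNIV. w c * exp (- ea * l (p c) (y (Suc t))))
      \<le> sum w UNIV * exp (- ea * l (\<Sum>c\<in>UNIV. (w c / sum w UNIV) *\<^sub>R p c) (y (Suc t)) + ea\<^sup>2 / 8)"
    using ea alpha_hat_add_pos[of t j]
    by (intro exp_weights_step[where C = A] loss_convex targets loss_range) (auto simp: W)
  moreover have "(\<Sum>c\<in>UNIV. (w c / sum w UNIV) *\<^sub>R p c) = fb (Suc t) j"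
    by (simp add: W fbar_Suc w_def p_def UNIV_bool ac_simps)
  ultimately show ?thesis
    by (simp add: W w_def p_def UNIV_bool alpha_hat_Suc alpha_hat'_Suc ac_simps)
qed

lemma social_potential_step:
  assumes "j < N"
  shows "(\<Sum>k\<in>Lam Omega j t. w_hat (Suc t) k)
    \<le> (\<Sum>k\<in>Lam Omega j t. w_hat t k) * exp (- ew * l (fh (Suc t) j) (y (Suc t)) + ew\<^sup>2 / 8)"
proof -
  have "(\<Sum>k\<in>Lam Omega j t. w_hat t k) > 0"
    by (rule sum_pos2[OF Lam_finite[OF assms] self_in_Lam]) (auto simp: w_hat_eq intro: less_imp_le)
  moreover have "fb (Suc t) k \<in> A" if "k \<in> Lam Omega j t" for k
    using that Lam_subset[OF assms] by (intro fbar_in_A) auto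
  ultimately show ?thesis
    unfolding w_hat_Suc fhat_Suc using assms ew
    by (intro exp_weights_step[where C = A] Lam_finite loss_convex targets loss_range)
      (auto simp: w_hat_eq)
qed

lemma individual_regret:
  assumes "j < N"
  shows "cumLbar ea ew l f y Omega T j - cumL l f y T j \<le> ea * real T / 8 + ln 2 / ea"
proof -
  have "(\<Sum>s=1..T. l (fb s j) (y s)) - cumL l f y T j
      \<le> ea * real T / 8 + ln (alpha_hat 0 j + alpha_hat' 0 j) / ea"
  proof (rule exp_potential_regret[OF ea, where P = "\<lambda>t. alpha_hat t j + alpha_hat' t j"])
    show "exp (- ea * cumL l f y T j) \<le> alpha_hat T j + alpha_hat' T j"
      using alpha_hat'_pos[of T j] by (simp add: alpha_hat_eq)
  qed (rule individual_potential_step[OF assms])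
  then show ?thesis
    by (simp add: cumLbar_def state_0)
qed

lemma social_regret:
  assumes "j < N" and shrinking: "\<And>t. 1 \<le> t \<Longrightarrow> t \<le> T \<Longrightarrow> Omega j t \<subseteq> Omega j (t - 1)"
  shows "cumLhat ea ew l f y Omega T j - cumLbar ea ew l f y Omega T j
     \<le> ew * real T / 8 + ln (real (card (Lam Omega j 0))) / ew"
proof -
  define P where "P t = (\<Sum>k\<in>Lam Omega j t. w_hat t k)" for t
  have "(\<Sum>s=1..T. l (fh s j) (y s)) - cumLbar ea ew l f y Omega T j \<le> ew * real T / 8 + ln (P 0) / ew"
  proof (rule exp_potential_regret[OF ew])
    fix t
    assume "t < T"
    then have "Lam Omega j (Suc t) \<subseteq> Lam Omega j t"
      using shrinking[of "Suc t"] by (auto simp: Lam_def)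
    then have "P (Suc t) \<le> (\<Sum>k\<in>Lam Omega j t. w_hat (Suc t) k)"
      unfolding P_def by (intro sum_mono2[OF Lam_finite[OF assms(1)]]) (auto simp: w_hat_eq)
    also have "\<dots> \<le> P t * exp (- ew * l (fh (Suc t) j) (y (Suc t)) + ew\<^sup>2 / 8)"
      unfolding P_def by (rule social_potential_step[OF assms(1)])
    finally show "P (Suc t) \<le> P t * exp (- ew * l (fh (Suc t) j) (y (Suc t)) + ew\<^sup>2 / 8)" .
  next
    show "exp (- ew * cumLbar ea ew l f y Omega T j) \<le> P T"
      unfolding P_def w_hat_eq[symmetric]
      by (rule member_le_sum[OF self_in_Lam]) (auto simp: w_hat_eq Lam_finite assms(1))
  qed
  moreover have "P 0 = card (Lam Omega j 0)"
    by (simp add: P_def state_0)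
  ultimately show ?thesis
    by (simp add: cumLhat_def)
qed

end

theorem theorem2:
  fixes N T :: nat and A Y :: "'a::euclidean_space set"
    and l :: "'a \<Rightarrow> 'a \<Rightarrow> real" and f :: "nat \<Rightarrow> nat \<Rightarrow> 'a" and y :: "nat \<Rightarrow> 'a"
    and Omega :: "nat \<Rightarrow> nat \<Rightarrow> nat set"
    and ea ew L1 c0 alpha Delta_o :: real and delta :: "nat \<Rightarrow> real"
    and i istar jstar :: nat
  assumes N: "N \<ge> 1" and T: "T \<ge> 1"
    and convA: "convex A" and convY: "convex Y"
    and l_range: "\<And>x v. x \<in> A \<Longrightarrow> v \<in> Y \<Longrightarrow> 0 \<le> l x v \<and> l x v \<le> 1"
    and l_convex: "\<And>v. v \<in> Y \<Longrightarrow> convex_on A (\<lambda>x. l x v)"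
    and yY: "\<And>t. y t \<in> Y"
    and fA: "\<And>t j. t \<ge> 1 \<Longrightarrow> j < N \<Longrightarrow> f t j \<in> A"
    and graph_dom: "\<And>j t. j < N \<Longrightarrow> Omega j t \<subseteq> {..<N} - {j}"
    and graph_sym: "\<And>j k t. j < N \<Longrightarrow> k < N \<Longrightarrow> (k \<in> Omega j t \<longleftrightarrow> j \<in> Omega k t)"
    and ea: "ea > 0" and ew: "ew > 0"
    and i: "i < N"
    and A1: "\<And>t. 1 \<le> t \<Longrightarrow> t \<le> T \<Longrightarrow> Omega i t \<subseteq> Omega i (t - 1)"
    and L1: "L1 \<ge> 0"
    and A2: "\<And>x1 x2 v. x1 \<in> A \<Longrightarrow> x2 \<in> A \<Longrightarrow> v \<in> Y \<Longrightarrow> \<bar>l x1 v - l x2 v\<bar> \<le> L1 * norm (x1 - x2)"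
    and delta_nn: "\<And>t. 1 \<le> t \<Longrightarrow> t \<le> T \<Longrightarrow> delta t \<ge> 0"
    and A3: "\<And>t k j. 1 \<le> t \<Longrightarrow> t \<le> T \<Longrightarrow> k < N \<Longrightarrow> j < N \<Longrightarrow> norm (f t k - f t j) \<le> delta t"
    and istar: "istar < N" "\<And>j. j < N \<Longrightarrow> cumL l f y T istar \<le> cumL l f y T j"
    and c0: "c0 \<ge> 0" and alpha: "0 < alpha" "alpha \<le> 1"
    and A4: "cumL l f y T istar \<le> c0 * real T powr (1 - alpha)"
    and Delta_o: "Delta_o \<ge> (\<Sum>t=1..T. delta t)"
    and jstar: "jstar < N" "\<And>j. j < N \<Longrightarrow> cumLbar ea ew l f y Omega T jstar \<le> cumLbar ea ew l f y Omega T j"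
  shows "cumLhat ea ew l f y Omega T i - cumLbar ea ew l f y Omega T jstar
     \<le> ew * real T / 8 + ln (real (card (Lam Omega i 0))) / ew + ea * real T / 8 + ln 2 / ea
        + L1 * Delta_o + c0 * real T powr (1 - alpha)"
proof -
  interpret d2eal N A Y l f y Omega ea ew
  proof
    show "Omega j t \<subseteq> {..<N}" if "j < N" for j t
      using graph_dom[OF that] by blast
  qed (use convA l_range l_convex yY fA ea ew in auto)
  have social: "cumLhat ea ew l f y Omega T i - cumLbar ea ew l f y Omega T i
      \<le> ew * real T / 8 + ln (real (card (Lam Omega i 0))) / ew"
    by (rule social_regret[OF i A1])
  have individual: "cumLbar ea ew l f y Omega T i - cumL l f y T i \<le> ea * real T / 8 + ln 2 / ea"
    by (rule individual_regret[OF i])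
  have "cumL l f y T i \<le> cumL l f y T istar + L1 * (\<Sum>t=1..T. delta t)"
    by (rule cumL_le_cumL_add_Lipschitz[OF A2 L1 yY]) (use fA A3 i istar(1) in auto)
  also have "\<dots> \<le> c0 * real T powr (1 - alpha) + L1 * Delta_o"
    using A4 Delta_o L1 by (intro add_mono mult_left_mono) auto
  finally have experts: "cumL l f y T i \<le> c0 * real T powr (1 - alpha) + L1 * Delta_o" .
  show ?thesis
    using social individual experts cumLbar_nonneg[OF jstar(1), of T] by linarith
qed

end
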